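(* $\mathcal{I}_{\mathrm{id}}\subsetneq\mathrm{HDZ}$; that is, every set in the Yorioka ideal $\mathcal{I}_{\mathrm{id}}$ has Hausdorff dimension $0$, and there is a subset of $2^\omega$ of Hausdorff dimension $0$ not belonging to $\mathcal{I}_{\mathrm{id}}$.
   Context: $2^\omega$ carries the metric $d(x,y)=2^{-\min\{n:x(n)\neq y(n)\}}$ for $x\neq y$ and $d(x,x)=0$. For $A\subseteq 2^\omega$, $s>0$: $\mathcal{H}^s(A)=\lim_{\delta\to0}\inf\{\sum_n(\operatorname{diam}C_n)^s:A\subseteq\bigcup_nC_n,\ \operatorname{diam}C_n\le\delta\}$, $\dim_H(A)=\inf\{s>0:\mathcal{H}^s(A)=0\}$, and $\mathrm{HDZ}=\{A\subseteq2^\omega:\dim_H(A)=0\}$. For $\sigma\in(2^{<\omega})^\omega$, let $(\operatorname{ht}\sigma)(n)=|\sigma(n)|$ and $[\sigma]_\infty=\{x\in2^\omega:\exists^\infty n\ \sigma(n)\subseteq x\}$. For $g\in\omega^\omega$, $\mathcal{J}_g=\{A\subseteq2^\omega:\exists\sigma\in(2^{<\omega})^\omega\,(\operatorname{ht}\sigma=g\wedge A\subseteq[\sigma]_\infty)\}$. For $f,g\in\omega^\omega$, $f\ll g$ iff for every $k\in\omega$, $f(n^k)\le g(n)$ for all but finitely many $n$. For increasing $f\in\omega^\omega$, the Yorioka ideal is $\mathcal{I}_f=\bigcup_{g\gg f}\mathcal{J}_g$; $\mathrm{id}$ is the identity function on $\omega$. *)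

theory Defs
  imports "HOL-Analysis.Analysis"
begin

type_synonym cantor = "nat \<Rightarrow> bool"

definition cdist :: "cantor \<Rightarrow> cantor \<Rightarrow> real" where
  "cdist x y = (if x = y then 0 else 2 powr (- real (LEAST n. x n \<noteq> y n)))"

definition cdiam :: "cantor set \<Rightarrow> real" where
  "cdiam C = (if C = {} then 0 else (SUP p\<in>C \<times> C. cdist (fst p) (snd p)))"

text \<open>Hausdorff measure: the limit as delta tends to 0 of the (monotone) delta-approximations
  is written as the supremum over delta > 0.\<close>
definition hausdorff_approx :: "real \<Rightarrow> real \<Rightarrow> cantor set \<Rightarrow> ennreal" where
  "hausdorff_approx s \<delta> A =
     (INF C\<in>{C :: nat \<Rightarrow> cantor set. A \<subseteq> (\<Union>n. C n) \<and> (\<forall>n. cdiam (C n) \<le> \<delta>)}.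
        (\<Sum>n. ennreal (cdiam (C n) powr s)))"

definition hausdorff_measure :: "real \<Rightarrow> cantor set \<Rightarrow> ennreal" where
  "hausdorff_measure s A = (SUP \<delta>\<in>{0<..}. hausdorff_approx s \<delta> A)"

definition hausdorff_dim :: "cantor set \<Rightarrow> real" where
  "hausdorff_dim A = Inf {s. s > 0 \<and> hausdorff_measure s A = 0}"

definition HDZ :: "cantor set set" where
  "HDZ = {A. hausdorff_dim A = 0}"

definition is_prefix :: "bool list \<Rightarrow> cantor \<Rightarrow> bool" where
  "is_prefix s x \<longleftrightarrow> (\<forall>i<length s. s ! i = x i)"

definition inf_often_set :: "(nat \<Rightarrow> bool list) \<Rightarrow> cantor set" where
  "inf_often_set \<sigma> = {x. \<exists>\<^sub>\<infinity>n. is_prefix (\<sigma> n) x}"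

definition J_ideal :: "(nat \<Rightarrow> nat) \<Rightarrow> cantor set set" where
  "J_ideal g = {A. \<exists>\<sigma>. (\<forall>n. length (\<sigma> n) = g n) \<and> A \<subseteq> inf_often_set \<sigma>}"

definition ll :: "(nat \<Rightarrow> nat) \<Rightarrow> (nat \<Rightarrow> nat) \<Rightarrow> bool" (infix "\<lless>" 50) where
  "f \<lless> g \<longleftrightarrow> (\<forall>k::nat. \<forall>\<^sub>F n in sequentially. f (n ^ k) \<le> g n)"

definition yorioka :: "(nat \<Rightarrow> nat) \<Rightarrow> cantor set set" where
  "yorioka f = (\<Union>g\<in>{g. f \<lless> g}. J_ideal g)"

end

theory Submission
  imports Defs "HOL-Library.Sublist" "HOL-Library.Log_Nat"
begin

text \<open>A set covered by infinitely many cylinders [\<sigma> n] with |\<sigma> n| \<ge> n is, for every M, covered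
  by the tail cylinders with n \<ge> M, whose s-dimensional sizes form a geometric series; hence every
  set in a Yorioka ideal \<J>_g with g \<gg> id has Hausdorff dimension 0.

  For the converse failure, spread y carries y j at position 2^j and is False elsewhere. Its range
  is covered by 2^J cylinders of length 2^J, which gives dimension 0. But a cylinder of length
  g n containing spread y fixes the first ceillog2 (g n) bits of y, and when \<Sum> 1/g n < \<infinity>
  a Kraft-type argument finds y that extends only finitely many of these prefixes, so the range
  of spread lies in no \<J>_g with g \<gg> id.\<close>

definition cylinder :: "bool list \<Rightarrow> cantor set" where
  "cylinder t = {x. is_prefix t x}"

lemma two_powr_minus_nat: "(2::real) powr - real n = (1/2) ^ n"
  by (simp add: powr_minus powr_realpow power_one_over inverse_eq_divide)

lemma two_powr_minus_bounds:
  fixes s :: real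
  assumes "s > 0"
  shows "0 < 2 powr - s" "2 powr - s < 1"
proof -
  have "(2::real) powr - s < 2 powr 0" by (rule powr_less_mono) (use assms in auto)
  then show "0 < 2 powr - s" "2 powr - s < 1" by auto
qed

lemma cdist_le_if_common_prefix:
  assumes "is_prefix t x" "is_prefix t y"
  shows "cdist x y \<le> (1/2) ^ length t"
proof (cases "x = y")
  case False
  then obtain m where m: "x m \<noteq> y m" by auto
  have "length t \<le> (LEAST n. x n \<noteq> y n)"
  proof (rule ccontr)
    assume "\<not> ?thesis"
    moreover have "x (LEAST n. x n \<noteq> y n) \<noteq> y (LEAST n. x n \<noteq> y n)"
      by (rule LeastI[of _ m]) (rule m)
    ultimately show False using assms by (auto simp: is_prefix_def)
  qed
  then have "2 powr - real (LEAST n. x n \<noteq> y n) \<le> (2::real) powr - real (length t)"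
    by simp
  then show ?thesis using False by (simp add: cdist_def two_powr_minus_nat)
qed (simp add: cdist_def)

lemma bdd_above_cdist: "bdd_above ((\<lambda>p. cdist (fst p) (snd p)) ` S)"
proof (rule bdd_aboveI2)
  have "2 powr - real n \<le> (2::real) powr 0" for n by (rule powr_mono) auto
  then show "cdist (fst p) (snd p) \<le> 1" for p by (simp add: cdist_def)
qed

lemma cdiam_empty [simp]: "cdiam {} = 0"
  by (simp add: cdiam_def)

lemma cdiam_nonneg: "0 \<le> cdiam C"
proof (cases "C = {}")
  case False
  then obtain x where "x \<in> C" by auto
  then have "cdist (fst (x, x)) (snd (x, x)) \<le> (SUP p\<in>C \<times> C. cdist (fst p) (snd p))"
    by (intro cSUP_upper bdd_above_cdist) auto
  then show ?thesis using False by (simp add: cdiam_def cdist_def)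
qed (simp add: cdiam_def)

lemma cdiam_cylinder_le:
  assumes "k \<le> length t"
  shows "cdiam (cylinder t) \<le> (1/2) ^ k"
proof -
  have "(SUP p\<in>cylinder t \<times> cylinder t. cdist (fst p) (snd p)) \<le> (1/2) ^ length t"
    by (rule cSUP_least) (auto simp: cylinder_def cdist_le_if_common_prefix is_prefix_def)
  also have "\<dots> \<le> (1/2) ^ k" by (rule power_decreasing) (use assms in auto)
  finally show ?thesis by (simp add: cdiam_def)
qed

lemma cdiam_cylinder_powr_le:
  assumes "0 \<le> s" "k \<le> length t"
  shows "cdiam (cylinder t) powr s \<le> (2 powr - s) ^ k"
proof -
  have "cdiam (cylinder t) powr s \<le> ((1/2) ^ k) powr s"
    by (rule powr_mono2) (use assms cdiam_nonneg cdiam_cylinder_le in auto)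
  also have "\<dots> = (2 powr - s) ^ k"
    by (simp add: powr_powr mult.commute flip: two_powr_minus_nat powr_realpow)
  finally show ?thesis .
qed

lemma hausdorff_approx_le_cover:
  assumes "A \<subseteq> (\<Union>n. C n)" "\<And>n. cdiam (C n) \<le> \<delta>"
  shows "hausdorff_approx s \<delta> A \<le> (\<Sum>n. ennreal (cdiam (C n) powr s))"
  unfolding hausdorff_approx_def by (rule INF_lower) (use assms in blast)

lemma hausdorff_approx_le_finite_cover:
  assumes "finite F" "A \<subseteq> \<Union>F" "\<And>C. C \<in> F \<Longrightarrow> cdiam C \<le> \<delta>" "0 \<le> \<delta>"
  shows "hausdorff_approx s \<delta> A \<le> (\<Sum>C\<in>F. ennreal (cdiam C powr s))"
proof -
  obtain xs where xs: "set xs = F" "distinct xs" using finite_distinct_list[OF assms(1)] by blast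
  define C where "C n = (if n < length xs then xs ! n else {})" for n
  have "F \<subseteq> range C"
  proof
    fix X assume "X \<in> F"
    then obtain i where "i < length xs" "X = xs ! i" using xs(1) by (auto simp: in_set_conv_nth)
    then have "X = C i" by (simp add: C_def)
    then show "X \<in> range C" by blast
  qed
  then have "\<Union>F \<subseteq> (\<Union>n. C n)" by (rule Sup_subset_mono)
  with assms(2) have "A \<subseteq> (\<Union>n. C n)" by (rule order.trans)
  moreover have "cdiam (C n) \<le> \<delta>" for n
    using assms(3,4) xs(1) nth_mem[of n xs] by (simp add: C_def)
  ultimately have "hausdorff_approx s \<delta> A \<le> (\<Sum>n. ennreal (cdiam (C n) powr s))"
    by (rule hausdorff_approx_le_cover)
  also have "\<dots> = (\<Sum>n<length xs. ennreal (cdiam (xs ! n) powr s))"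
    by (subst suminf_finite[of "{..<length xs}"]) (simp_all add: C_def)
  also have "\<dots> = (\<Sum>C\<in>F. ennreal (cdiam C powr s))"
    by (rule sum.reindex_bij_betw[OF bij_betw_nth]) (use xs in auto)
  finally show ?thesis .
qed

lemma hausdorff_measure_eq_0I:
  assumes "\<And>\<delta> \<epsilon>. \<delta> > 0 \<Longrightarrow> \<epsilon> > 0 \<Longrightarrow> hausdorff_approx s \<delta> A \<le> ennreal \<epsilon>"
  shows "hausdorff_measure s A = 0"
proof -
  have "hausdorff_approx s \<delta> A \<le> 0" if "\<delta> > 0" for \<delta>
    by (rule ennreal_le_epsilon) (simp add: assms that)
  then have "(SUP \<delta>\<in>{0<..}. hausdorff_approx s \<delta> A) = (SUP \<delta>\<in>{0::real<..}. 0::ennreal)"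
    by (intro SUP_cong) auto
  then show ?thesis by (simp add: hausdorff_measure_def)
qed

lemma in_HDZI:
  assumes "\<And>s. s > 0 \<Longrightarrow> hausdorff_measure s A = 0"
  shows "A \<in> HDZ"
proof -
  have "{s. s > 0 \<and> hausdorff_measure s A = 0} = {0<..}" using assms by auto
  then show ?thesis by (simp add: HDZ_def hausdorff_dim_def)
qed

lemma eventually_power_less:
  fixes r :: real
  assumes "0 \<le> r" "r < 1" "e > 0"
  shows "\<forall>\<^sub>F n in sequentially. r ^ n < e"
  using order_tendstoD(2)[OF LIMSEQ_power_zero \<open>e > 0\<close>] assms by simp

lemma inf_often_set_subset_tail_cylinders: "inf_often_set \<sigma> \<subseteq> (\<Union>n. cylinder (\<sigma> (n + M)))"
proof
  fix x assume "x \<in> inf_often_set \<sigma>"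
  then obtain n where "n \<ge> M" "is_prefix (\<sigma> n) x"
    by (auto simp: inf_often_set_def INFM_nat_le)
  then have "x \<in> cylinder (\<sigma> (n - M + M))" by (simp add: cylinder_def)
  then show "x \<in> (\<Union>n. cylinder (\<sigma> (n + M)))" by blast
qed

lemma hausdorff_approx_le_tail_cover:
  assumes A: "A \<subseteq> inf_often_set \<sigma>" and long: "\<forall>n\<ge>M. n \<le> length (\<sigma> n)"
    and "(1/2) ^ M \<le> \<delta>" "s > 0"
  shows "hausdorff_approx s \<delta> A \<le> ennreal ((2 powr - s) ^ M / (1 - 2 powr - s))"
proof -
  define r where "r = (2::real) powr - s"
  have r: "0 < r" "r < 1" unfolding r_def using two_powr_minus_bounds[OF \<open>s > 0\<close>] by auto
  define C where "C n = cylinder (\<sigma> (n + M))" for n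
  have long_M: "n + M \<le> length (\<sigma> (n + M))" for n using long by simp
  have "hausdorff_approx s \<delta> A \<le> (\<Sum>n. ennreal (cdiam (C n) powr s))"
  proof (rule hausdorff_approx_le_cover)
    show "A \<subseteq> (\<Union>n. C n)"
      using A inf_often_set_subset_tail_cylinders[of \<sigma> M] unfolding C_def by (rule order.trans)
    fix n
    have "M \<le> length (\<sigma> (n + M))" using long_M[of n] by simp
    then have "cdiam (C n) \<le> (1/2) ^ M" unfolding C_def by (rule cdiam_cylinder_le)
    then show "cdiam (C n) \<le> \<delta>" using \<open>(1/2) ^ M \<le> \<delta>\<close> by simp
  qed
  also have "\<dots> \<le> (\<Sum>n. ennreal (r ^ M * r ^ n))"
  proof (intro suminf_le ennreal_leI)
    show "cdiam (C n) powr s \<le> r ^ M * r ^ n" for n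
      using cdiam_cylinder_powr_le[OF _ long_M, of s n] \<open>s > 0\<close>
      by (simp add: C_def r_def power_add mult.commute)
  qed auto
  also have "\<dots> = ennreal (r ^ M * (1 / (1 - r)))"
  proof (rule suminf_ennreal_eq)
    show "(\<lambda>n. r ^ M * r ^ n) sums (r ^ M * (1 / (1 - r)))"
      by (rule sums_mult, rule geometric_sums) (use r in auto)
  qed (use r in simp)
  finally show ?thesis by (simp add: r_def)
qed

lemma subset_inf_often_set_in_HDZ:
  assumes A: "A \<subseteq> inf_often_set \<sigma>" and long: "\<forall>\<^sub>F n in sequentially. n \<le> length (\<sigma> n)"
  shows "A \<in> HDZ"
proof (rule in_HDZI)
  fix s :: real assume "s > 0"
  define r where "r = (2::real) powr - s"
  have r: "0 < r" "r < 1" unfolding r_def using two_powr_minus_bounds[OF \<open>s > 0\<close>] by auto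
  show "hausdorff_measure s A = 0"
  proof (rule hausdorff_measure_eq_0I)
    fix \<delta> \<epsilon> :: real assume "\<delta> > 0" "\<epsilon> > 0"
    have "\<forall>\<^sub>F M in sequentially. (1/2) ^ M < \<delta> \<and> r ^ M < \<epsilon> * (1 - r)
        \<and> (\<forall>n\<ge>M. n \<le> length (\<sigma> n))"
      using eventually_power_less[of "1/2" \<delta>] eventually_power_less[of r "\<epsilon> * (1 - r)"]
        eventually_all_ge_at_top[OF long] \<open>\<delta> > 0\<close> \<open>\<epsilon> > 0\<close> r
      by (intro eventually_conj) auto
    then obtain M where M: "(1/2) ^ M < \<delta>" "r ^ M < \<epsilon> * (1 - r)" "\<forall>n\<ge>M. n \<le> length (\<sigma> n)"
      by (auto simp: eventually_sequentially)
    have "hausdorff_approx s \<delta> A \<le> ennreal (r ^ M / (1 - r))"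
      unfolding r_def using M(1,3) \<open>s > 0\<close> by (intro hausdorff_approx_le_tail_cover[OF A]) simp_all
    also have "\<dots> \<le> ennreal \<epsilon>"
      using M(2) r by (intro ennreal_leI) (simp add: field_simps)
    finally show "hausdorff_approx s \<delta> A \<le> ennreal \<epsilon>" .
  qed
qed

lemma J_ideal_subset_HDZ:
  assumes "\<forall>\<^sub>F n in sequentially. n \<le> g n"
  shows "J_ideal g \<subseteq> HDZ"
  using subset_inf_often_set_in_HDZ assms by (auto simp: J_ideal_def)

definition extension_weight :: "(nat \<Rightarrow> bool list) \<Rightarrow> bool list \<Rightarrow> nat \<Rightarrow> real" where
  "extension_weight p s n = (if prefix s (p n) then (1/2) ^ (length (p n) - length s) else 0)"

definition extension_mass :: "(nat \<Rightarrow> bool list) \<Rightarrow> bool list \<Rightarrow> real" where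
  "extension_mass p s = (\<Sum>n. extension_weight p s n)"

lemma extension_weight_nonneg: "0 \<le> extension_weight p s n"
  by (simp add: extension_weight_def)

lemma extension_weight_le: "extension_weight p s n \<le> 2 ^ length s * (1/2) ^ length (p n)"
proof (cases "prefix s (p n)")
  case True
  then have "length s \<le> length (p n)" by (rule prefix_length_le)
  then have "2 ^ length s * (1/2::real) ^ length (p n) = (1/2) ^ (length (p n) - length s)"
    by (simp add: power_one_over power_diff)
  then show ?thesis using True by (simp add: extension_weight_def)
qed (simp add: extension_weight_def)

lemma extension_weight_children:
  "extension_weight p (s @ [True]) n + extension_weight p (s @ [False]) n \<le> 2 * extension_weight p s n"
proof (cases "prefix s (p n) \<and> p n \<noteq> s")
  case True
  then obtain zs where "p n = s @ zs" "zs \<noteq> []" by (auto elim: prefixE)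
  then obtain b zs' where p: "p n = s @ b # zs'" by (cases zs) auto
  then have "prefix (s @ [b']) (p n) \<longleftrightarrow> b' = b" for b' by (auto simp: prefix_def)
  then show ?thesis using p by (cases b) (auto simp: extension_weight_def)
next
  case False
  then have "\<not> prefix (s @ [b]) (p n)" for b
    by (auto dest: append_prefixD prefix_length_le)
  then show ?thesis by (simp add: extension_weight_def)
qed

lemma summable_extension_weight:
  assumes "summable (\<lambda>n. (1/2::real) ^ length (p n))"
  shows "summable (extension_weight p s)"
  by (rule summable_comparison_test[OF _ summable_mult[OF assms, of "2 ^ length s"]])
     (auto simp: extension_weight_nonneg extension_weight_le)

lemma extension_mass_children:
  assumes "summable (\<lambda>n. (1/2::real) ^ length (p n))"
  shows "extension_mass p (s @ [True]) + extension_mass p (s @ [False]) \<le> 2 * extension_mass p s"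
proof -
  note summable = summable_extension_weight[OF assms]
  have "extension_mass p (s @ [True]) + extension_mass p (s @ [False])
      = (\<Sum>n. extension_weight p (s @ [True]) n + extension_weight p (s @ [False]) n)"
    unfolding extension_mass_def using suminf_add[OF summable summable] by simp
  also have "\<dots> \<le> (\<Sum>n. 2 * extension_weight p s n)"
    by (rule suminf_le) (auto intro!: extension_weight_children summable_add summable summable_mult)
  also have "\<dots> = 2 * extension_mass p s"
    unfolding extension_mass_def by (rule suminf_mult[OF summable])
  finally show ?thesis .
qed

text \<open>extension_mass p s is 2^|s| times the total weight \<Sum> 2^-|p n| of the words p n extending s.
  The weight of s splits between its two children, so a branch that always moves to a child of no
  larger mass stays below the mass of the root; a node that equals some p n has mass at least 1.\<close>

primrec greedy_branch :: "(nat \<Rightarrow> bool list) \<Rightarrow> nat \<Rightarrow> bool list" where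
  "greedy_branch p 0 = []"
| "greedy_branch p (Suc k) = greedy_branch p k @
     [extension_mass p (greedy_branch p k @ [True]) \<le> extension_mass p (greedy_branch p k)]"

lemma length_greedy_branch [simp]: "length (greedy_branch p k) = k"
  by (induction k) auto

lemma nth_greedy_branch: "i < k \<Longrightarrow> greedy_branch p k ! i = greedy_branch p (Suc i) ! i"
proof (induction k)
  case (Suc k)
  then show ?case by (cases "i < k") (auto simp: nth_append less_Suc_eq)
qed simp

lemma extension_mass_greedy_branch_le:
  assumes "summable (\<lambda>n. (1/2::real) ^ length (p n))"
  shows "extension_mass p (greedy_branch p k) \<le> extension_mass p []"
proof (induction k)
  case (Suc k)
  have "extension_mass p (greedy_branch p (Suc k)) \<le> extension_mass p (greedy_branch p k)"
    using extension_mass_children[OF assms, of "greedy_branch p k"]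
    by (cases "extension_mass p (greedy_branch p k @ [True]) \<le> extension_mass p (greedy_branch p k)") auto
  then show ?case using Suc by simp
qed simp

lemma ex_avoiding_prefixes:
  assumes summable: "summable (\<lambda>n. (1/2::real) ^ length (p n))"
    and less_1: "(\<Sum>n. (1/2::real) ^ length (p n)) < 1"
  obtains y where "\<And>n. \<not> is_prefix (p n) y"
proof
  define y where "y i = greedy_branch p (Suc i) ! i" for i
  fix n
  show "\<not> is_prefix (p n) y"
  proof
    assume "is_prefix (p n) y"
    then have branch: "p n = greedy_branch p (length (p n))"
      by (intro nth_equalityI) (auto simp: is_prefix_def y_def nth_greedy_branch)
    have "1 = extension_weight p (p n) n" by (simp add: extension_weight_def)
    also have "\<dots> \<le> extension_mass p (p n)" unfolding extension_mass_def
      using sum_le_suminf[OF summable_extension_weight[OF summable], of "{n}"]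
      by (simp add: extension_weight_nonneg)
    also have "\<dots> \<le> extension_mass p []"
      by (subst branch) (rule extension_mass_greedy_branch_le[OF summable])
    also have "\<dots> < 1"
      using less_1 by (simp add: extension_mass_def extension_weight_def)
    finally show False by simp
  qed
qed

lemma ex_notin_inf_often_set:
  assumes "summable (\<lambda>n. (1/2::real) ^ length (p n))"
  obtains y where "y \<notin> inf_often_set p"
proof -
  obtain N where "(\<Sum>n. (1/2::real) ^ length (p (n + N))) < 1"
    using suminf_exist_split[OF _ assms, of 1] by (auto simp: abs_less_iff)
  moreover have "summable (\<lambda>n. (1/2::real) ^ length (p (n + N)))"
    using assms by (rule summable_ignore_initial_segment)
  ultimately obtain y where y: "\<And>n. \<not> is_prefix (p (n + N)) y"
    using ex_avoiding_prefixes[of "\<lambda>n. p (n + N)"] by auto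
  have "y \<notin> inf_often_set p"
  proof
    assume "y \<in> inf_often_set p"
    then obtain n where "n \<ge> N" "is_prefix (p n) y"
      by (auto simp: inf_often_set_def INFM_nat_le)
    then show False using y[of "n - N"] by simp
  qed
  then show ?thesis by (rule that)
qed

definition spread :: "cantor \<Rightarrow> cantor" where
  "spread y i \<longleftrightarrow> (\<exists>j. i = 2 ^ j \<and> y j)"

lemma spread_two_power [simp]: "spread y (2 ^ j) = y j"
  by (simp add: spread_def)

definition spread_prefix :: "bool list \<Rightarrow> bool list" where
  "spread_prefix v = map (spread (\<lambda>j. j < length v \<and> v ! j)) [0..<2 ^ length v]"

definition spread_cover :: "nat \<Rightarrow> cantor set set" where
  "spread_cover J = cylinder ` spread_prefix ` {v. length v = J}"

lemma spread_in_cylinder_spread_prefix: "spread y \<in> cylinder (spread_prefix (map y [0..<J]))"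
proof -
  have "spread (\<lambda>j. j < J \<and> map y [0..<J] ! j) i = spread y i" if "i < 2 ^ J" for i
  proof -
    have "(i = 2 ^ j \<and> j < J \<and> map y [0..<J] ! j) \<longleftrightarrow> (i = 2 ^ j \<and> y j)" for j
    proof (cases "i = 2 ^ j")
      case True
      then have "j < J" using that by simp
      then show ?thesis using True by simp
    qed simp
    then show ?thesis by (simp add: spread_def)
  qed
  then show ?thesis by (simp add: cylinder_def is_prefix_def spread_prefix_def)
qed

lemma range_spread_subset_spread_cover: "range spread \<subseteq> \<Union>(spread_cover J)"
proof
  fix x assume "x \<in> range spread"
  then obtain y where "x = spread y" by blast
  moreover have "cylinder (spread_prefix (map y [0..<J])) \<in> spread_cover J"
    unfolding spread_cover_def by (rule imageI, rule imageI) simp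
  ultimately show "x \<in> \<Union>(spread_cover J)" using spread_in_cylinder_spread_prefix by blast
qed

lemma finite_spread_cover: "finite (spread_cover J)"
  using finite_lists_length_eq[of "UNIV :: bool set" J] by (simp add: spread_cover_def)

lemma card_spread_cover_le: "card (spread_cover J) \<le> 2 ^ J"
proof -
  have "card (spread_cover J) \<le> card {v :: bool list. length v = J}"
    unfolding spread_cover_def image_image
    by (rule card_image_le) (use finite_lists_length_eq[of "UNIV :: bool set" J] in simp)
  also have "\<dots> = 2 ^ J" using card_lists_length_eq[of "UNIV :: bool set" J] by simp
  finally show ?thesis .
qed

lemma spread_cover_cylinder:
  assumes "C \<in> spread_cover J"
  obtains t where "C = cylinder t" "length t = 2 ^ J"
  using assms by (auto simp: spread_cover_def spread_prefix_def)

lemma hausdorff_approx_range_spread_le: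
  assumes "(1/2) ^ 2 ^ J \<le> \<delta>" "s > 0"
  shows "hausdorff_approx s \<delta> (range spread) \<le> ennreal (2 ^ J * (2 powr - s) ^ 2 ^ J)"
proof -
  define r where "r = (2::real) powr - s"
  have r: "0 < r" using two_powr_minus_bounds[OF \<open>s > 0\<close>] by (simp add: r_def)
  have diam: "cdiam C \<le> (1/2) ^ 2 ^ J" and diam_powr: "cdiam C powr s \<le> r ^ 2 ^ J"
    if C: "C \<in> spread_cover J" for C
  proof -
    obtain t where "C = cylinder t" "length t = 2 ^ J" using spread_cover_cylinder[OF C] .
    then show "cdiam C \<le> (1/2) ^ 2 ^ J" "cdiam C powr s \<le> r ^ 2 ^ J"
      using cdiam_cylinder_le[of "2 ^ J" t] cdiam_cylinder_powr_le[of s "2 ^ J" t] \<open>s > 0\<close>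
      by (simp_all add: r_def)
  qed
  have "hausdorff_approx s \<delta> (range spread) \<le> (\<Sum>C\<in>spread_cover J. ennreal (cdiam C powr s))"
  proof (rule hausdorff_approx_le_finite_cover[OF finite_spread_cover range_spread_subset_spread_cover])
    show "cdiam C \<le> \<delta>" if "C \<in> spread_cover J" for C
      using diam[OF that] assms(1) by simp
    have "0 \<le> (1/2::real) ^ 2 ^ J" by simp
    then show "0 \<le> \<delta>" using assms(1) by linarith
  qed
  also have "\<dots> \<le> (\<Sum>C\<in>spread_cover J. ennreal (r ^ 2 ^ J))"
    by (intro sum_mono ennreal_leI diam_powr)
  also have "\<dots> = of_nat (card (spread_cover J)) * ennreal (r ^ 2 ^ J)"
    by simp
  also have "\<dots> \<le> of_nat (2 ^ J) * ennreal (r ^ 2 ^ J)"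
    by (intro mult_right_mono of_nat_mono card_spread_cover_le) simp
  also have "\<dots> = ennreal (2 ^ J * r ^ 2 ^ J)"
    using r by (simp add: ennreal_mult ennreal_of_nat_eq_real_of_nat)
  finally show ?thesis by (simp add: r_def)
qed

lemma range_spread_in_HDZ: "range spread \<in> HDZ"
proof (rule in_HDZI)
  fix s :: real assume "s > 0"
  define r where "r = (2::real) powr - s"
  have r: "0 < r" "r < 1" unfolding r_def using two_powr_minus_bounds[OF \<open>s > 0\<close>] by auto
  show "hausdorff_measure s (range spread) = 0"
  proof (rule hausdorff_measure_eq_0I)
    fix \<delta> \<epsilon> :: real assume "\<delta> > 0" "\<epsilon> > 0"
    have "(\<lambda>m. of_nat m * r ^ m) \<longlonglongrightarrow> 0" by (rule powser_times_n_limit_0) (use r in simp)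
    then have "\<forall>\<^sub>F m in sequentially. (1/2) ^ m < \<delta> \<and> real m * r ^ m < \<epsilon>"
      using eventually_power_less[of "1/2" \<delta>] order_tendstoD(2) \<open>\<delta> > 0\<close> \<open>\<epsilon> > 0\<close>
      by (intro eventually_conj) auto
    then obtain J where "\<forall>m\<ge>J. (1/2) ^ m < \<delta> \<and> real m * r ^ m < \<epsilon>"
      by (auto simp: eventually_sequentially)
    moreover have "J \<le> 2 ^ J" using less_exp[of J] by simp
    ultimately have "(1/2) ^ 2 ^ J < \<delta> \<and> real (2 ^ J) * r ^ 2 ^ J < \<epsilon>" by blast
    then have J: "(1/2) ^ 2 ^ J \<le> \<delta>" "2 ^ J * r ^ 2 ^ J < \<epsilon>" by simp_all
    have "hausdorff_approx s \<delta> (range spread) \<le> ennreal (2 ^ J * r ^ 2 ^ J)"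
      unfolding r_def using J(1) \<open>s > 0\<close> by (rule hausdorff_approx_range_spread_le)
    also have "\<dots> \<le> ennreal \<epsilon>" using J(2) by (intro ennreal_leI) simp
    finally show "hausdorff_approx s \<delta> (range spread) \<le> ennreal \<epsilon>" .
  qed
qed

definition spread_decode :: "bool list \<Rightarrow> bool list" where
  "spread_decode t = map (\<lambda>j. t ! (2 ^ j)) [0..<ceillog2 (length t)]"

lemma two_power_less_if_less_ceillog2:
  assumes "j < ceillog2 m"
  shows "2 ^ j < m"
proof -
  have "m > 0" using assms by (cases m) auto
  then show ?thesis using ceillog2_le_iff[of m j] assms by linarith
qed

lemma is_prefix_spread_decode:
  assumes "is_prefix t (spread y)"
  shows "is_prefix (spread_decode t) y"
  unfolding is_prefix_def
proof (intro allI impI)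
  fix j assume "j < length (spread_decode t)"
  then have "j < ceillog2 (length t)" by (simp add: spread_decode_def)
  then have "2 ^ j < length t" by (rule two_power_less_if_less_ceillog2)
  then have "t ! (2 ^ j) = y j" using assms by (simp add: is_prefix_def)
  then show "spread_decode t ! j = y j" using \<open>j < ceillog2 (length t)\<close> by (simp add: spread_decode_def)
qed

lemma half_power_length_spread_decode_le:
  assumes "t \<noteq> []"
  shows "(1/2::real) ^ length (spread_decode t) \<le> 1 / length t"
proof -
  have "(1/2::real) ^ length (spread_decode t) = 1 / 2 ^ ceillog2 (length t)"
    by (simp add: spread_decode_def power_one_over)
  also have "\<dots> \<le> 1 / length t"
  proof (rule divide_left_mono)
    show "real (length t) \<le> 2 ^ ceillog2 (length t)"
      using le_two_power_ceillog2[of "length t"] by (simp flip: of_nat_le_iff)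
  qed (use assms in auto)
  finally show ?thesis .
qed

lemma range_spread_notin_J_ideal:
  assumes pos: "\<forall>\<^sub>F n in sequentially. 0 < g n" and summable: "summable (\<lambda>n. 1 / real (g n))"
  shows "range spread \<notin> J_ideal g"
proof
  assume "range spread \<in> J_ideal g"
  then obtain \<sigma> where len: "\<And>n. length (\<sigma> n) = g n" and cover: "range spread \<subseteq> inf_often_set \<sigma>"
    unfolding J_ideal_def by blast
  from pos have "\<forall>\<^sub>F n in sequentially. norm ((1/2::real) ^ length (spread_decode (\<sigma> n))) \<le> 1 / real (g n)"
  proof eventually_elim
    case (elim n)
    then have "\<sigma> n \<noteq> []" using len[of n] by auto
    then show ?case using half_power_length_spread_decode_le[of "\<sigma> n"] by (simp add: len)
  qed
  then have "summable (\<lambda>n. (1/2::real) ^ length (spread_decode (\<sigma> n)))"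
    using summable by (rule summable_comparison_test_ev)
  then obtain y where y: "y \<notin> inf_often_set (\<lambda>n. spread_decode (\<sigma> n))"
    by (rule ex_notin_inf_often_set)
  have "spread y \<in> inf_often_set \<sigma>" using cover by blast
  then have "\<exists>\<^sub>\<infinity>n. is_prefix (\<sigma> n) (spread y)" by (simp add: inf_often_set_def)
  then have "\<exists>\<^sub>\<infinity>n. is_prefix (spread_decode (\<sigma> n)) y"
    by (rule INFM_mono) (rule is_prefix_spread_decode)
  then have "y \<in> inf_often_set (\<lambda>n. spread_decode (\<sigma> n))" by (simp add: inf_often_set_def)
  with y show False by contradiction
qed

lemma summable_inverse_if_square_le:
  assumes "\<forall>\<^sub>F n in sequentially. n ^ 2 \<le> g n"
  shows "summable (\<lambda>n. 1 / real (g n))"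
proof (rule summable_comparison_test_ev)
  show "summable (\<lambda>n. inverse (real n ^ 2))" by (rule inverse_power_summable) simp
  from assms eventually_gt_at_top[of 0]
  show "\<forall>\<^sub>F n in sequentially. norm (1 / real (g n)) \<le> inverse (real n ^ 2)"
  proof eventually_elim
    case (elim n)
    have "0 < real n ^ 2" using elim(2) by simp
    moreover have "real n ^ 2 \<le> real (g n)" using elim(1) by (simp flip: of_nat_power of_nat_le_iff)
    ultimately have "1 / real (g n) \<le> 1 / real n ^ 2" by (intro divide_left_mono mult_pos_pos) linarith+
    then show ?case by (simp add: inverse_eq_divide)
  qed
qed

theorem theorem3p7:
  shows "yorioka id \<subset> HDZ"
proof
  have "J_ideal g \<subseteq> HDZ" if "id \<lless> g" for g
  proof (rule J_ideal_subset_HDZ)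
    show "\<forall>\<^sub>F n in sequentially. n \<le> g n" using that[unfolded ll_def, rule_format, of 1] by simp
  qed
  then show "yorioka id \<subseteq> HDZ" by (auto simp: yorioka_def)
  have "range spread \<notin> J_ideal g" if "id \<lless> g" for g
  proof (rule range_spread_notin_J_ideal)
    have square: "\<forall>\<^sub>F n in sequentially. n ^ 2 \<le> g n" using that[unfolded ll_def, rule_format, of 2] by simp
    then show "summable (\<lambda>n. 1 / real (g n))" by (rule summable_inverse_if_square_le)
    from square eventually_gt_at_top[of 0] show "\<forall>\<^sub>F n in sequentially. 0 < g n"
      by eventually_elim (use less_le_trans[OF zero_less_power] in blast)
  qed
  then have "range spread \<notin> yorioka id" by (auto simp: yorioka_def)
  then show "yorioka id \<noteq> HDZ" using range_spread_in_HDZ by blast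
qed

end
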